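(* Let $\mathcal L$ be a finite relational language, let $E\notin\mathcal L$ be the binary predicate symbol of $T_{\mathrm{Graph}}$, let $\mathcal F$ be a family of models of $T_{\mathrm{Graph}}\cup T_{\mathcal L}$, and let $I\colon T_{\mathrm{Graph}}\leadsto\mathrm{Forb}_{T_{\mathrm{Graph}}\cup T_{\mathcal L}}(\mathcal F\!\uparrow^E)$ act identically on $E$. Then $$\chi(I)=\inf\{\chi(G): G\text{ a finite graph such that } I(M)\not\cong G \text{ for every model } M \text{ of } \mathrm{Forb}_{T_{\mathrm{Graph}}\cup T_{\mathcal L}}(\mathcal F\!\uparrow^E)\},$$ where $\chi(G)$ is the usual chromatic number and $\inf\varnothing=\infty$.
   Context: Structures are finite and canonical (no predicate holds on a tuple with a repeated entry); $R_P(M)$ is the set of (injective) tuples satisfying $P$. $T_{\mathcal L}$ is the theory whose models are all canonical $\mathcal L$-structures; $T_{\mathrm{Graph}}$ is the theory of simple graphs in the language $\{E\}$; $T_{\mathrm{Graph}}\cup T_{\mathcal L}$ is the theory over $\mathcal L\cup\{E\}$ combining both, whose models are graphs equipped with an arbitrary canonical $\mathcal L$-structure on the same vertex set. For a family $\mathcal F$ of such models, $\mathcal F\!\uparrow^E$ is the family of all models $F'$ of $T_{\mathrm{Graph}}\cup T_{\mathcal L}$ for which there is $F\in\mathcal F$ with $V(F')=V(F)$, $R_E(F')\supseteq R_E(F)$ and $R_P(F')=R_P(F)$ for all $P\in\mathcal L$. $\mathrm{Forb}_{T}(\mathcal G)$ is the theory whose models are the models of $T$ with no induced substructure isomorphic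 to a member of $\mathcal G$. $I$ acting identically on $E$ means $I(E)(x,y)=E(x,y)$, so $I(M)$ is the graph part of $M$. For an open interpretation $I\colon T_{\mathrm{Graph}}\leadsto T$, $\chi(I)=\sup(\{\ell\in\mathbb{N}_+:\forall n\ \exists N\in\mathcal M_n[T],\ T_{n,\ell}\subseteq I(N)\}\cup\{0\})+1$, where $\mathcal M_n[T]$ is the set of $n$-vertex models of $T$ up to isomorphism, $T_{n,\ell}$ is the complete $\ell$-partite graph on $n$ vertices with parts of sizes $\lfloor n/\ell\rfloor$ or $\lceil n/\ell\rceil$, and $G\subseteq H$ means an injection $V(G)\to V(H)$ mapping edges to edges. *)

theory Defs
  imports Main "HOL-Library.Extended_Nat"
begin

text \<open>Vertices are natural numbers
(every finite structure is isomorphic to one on natural numbers). The language L is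
a finite set Lang of predicate symbols of type 'p with arity function ar.\<close>

record 'p lstruct =
  verts :: "nat set"
  edges :: "(nat \<times> nat) set"
  rels  :: "'p \<Rightarrow> nat list set"

text \<open>Models of T_Graph \<union> T_L: nonempty finite vertex set, simple graph E,
canonical L-structure (only injective tuples of the right arity); symbols
outside L are interpreted as empty (normalisation).\<close>
definition is_model :: "'p set \<Rightarrow> ('p \<Rightarrow> nat) \<Rightarrow> 'p lstruct \<Rightarrow> bool" where
  "is_model Lang ar M \<longleftrightarrow>
     finite (verts M) \<and> verts M \<noteq> {} \<and>
     edges M \<subseteq> verts M \<times> verts M \<and> sym (edges M) \<and> irrefl (edges M) \<and>
     (\<forall>P\<in>Lang. rels M P \<subseteq> {xs. length xs = ar P \<and> distinct xs \<and> set xs \<subseteq> verts M}) \<and>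
     (\<forall>P. P \<notin> Lang \<longrightarrow> rels M P = {})"

definition struct_iso :: "'p set \<Rightarrow> 'p lstruct \<Rightarrow> 'p lstruct \<Rightarrow> bool" where
  "struct_iso Lang M N \<longleftrightarrow>
     (\<exists>f. bij_betw f (verts M) (verts N) \<and>
          (\<forall>x\<in>verts M. \<forall>y\<in>verts M. (x, y) \<in> edges M \<longleftrightarrow> (f x, f y) \<in> edges N) \<and>
          (\<forall>P\<in>Lang. \<forall>xs. set xs \<subseteq> verts M \<longrightarrow> (xs \<in> rels M P \<longleftrightarrow> map f xs \<in> rels N P)))"

definition induced :: "'p lstruct \<Rightarrow> nat set \<Rightarrow> 'p lstruct" where
  "induced M U = \<lparr>verts = U, edges = edges M \<inter> (U \<times> U),
                  rels = (\<lambda>P. {xs \<in> rels M P. set xs \<subseteq> U})\<rparr>"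

definition up_E :: "'p set \<Rightarrow> ('p \<Rightarrow> nat) \<Rightarrow> 'p lstruct set \<Rightarrow> 'p lstruct set" where
  "up_E Lang ar \<F> = {F'. is_model Lang ar F' \<and>
     (\<exists>F\<in>\<F>. verts F' = verts F \<and> edges F \<subseteq> edges F' \<and> (\<forall>P\<in>Lang. rels F' P = rels F P))}"

definition forb_model :: "'p set \<Rightarrow> ('p \<Rightarrow> nat) \<Rightarrow> 'p lstruct set \<Rightarrow> 'p lstruct \<Rightarrow> bool" where
  "forb_model Lang ar \<G> M \<longleftrightarrow> is_model Lang ar M \<and>
     \<not> (\<exists>U. U \<subseteq> verts M \<and> U \<noteq> {} \<and> (\<exists>G\<in>\<G>. struct_iso Lang (induced M U) G))"

type_synonym graph = "nat set \<times> (nat \<times> nat) set"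

definition fin_graph :: "graph \<Rightarrow> bool" where
  "fin_graph G \<longleftrightarrow> finite (fst G) \<and> fst G \<noteq> {} \<and> snd G \<subseteq> fst G \<times> fst G \<and>
     sym (snd G) \<and> irrefl (snd G)"

definition graph_iso :: "graph \<Rightarrow> graph \<Rightarrow> bool" where
  "graph_iso G H \<longleftrightarrow> (\<exists>f. bij_betw f (fst G) (fst H) \<and>
     (\<forall>x\<in>fst G. \<forall>y\<in>fst G. (x, y) \<in> snd G \<longleftrightarrow> (f x, f y) \<in> snd H))"

definition subgraph_emb :: "graph \<Rightarrow> graph \<Rightarrow> bool" where
  "subgraph_emb G H \<longleftrightarrow> (\<exists>f. inj_on f (fst G) \<and> f ` fst G \<subseteq> fst H \<and>
     (\<forall>(x, y)\<in>snd G. (f x, f y) \<in> snd H))"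

text \<open>I(M) for I acting identically on E: the graph part of M.\<close>
definition graph_part :: "'p lstruct \<Rightarrow> graph" where
  "graph_part M = (verts M, edges M)"

text \<open>Turan graph T_{n,l}: vertex i lies in part i mod l (parts of sizes floor/ceil of n/l).\<close>
definition turan :: "nat \<Rightarrow> nat \<Rightarrow> graph" where
  "turan n l = ({0..<n}, {(i, j). i < n \<and> j < n \<and> i mod l \<noteq> j mod l})"

definition chromatic_number :: "graph \<Rightarrow> nat" where
  "chromatic_number G = (LEAST k. \<exists>c :: nat \<Rightarrow> nat.
      (\<forall>v\<in>fst G. c v < k) \<and> (\<forall>(u, v)\<in>snd G. c u \<noteq> c v))"

text \<open>chi(I) for the interpretation I acting identically on E into Forb(F\<up>E);
values in enat, Sup of an unbounded set is \<infinity>. Here n ranges over positive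
integers since structures are nonempty.\<close>
definition chi_I :: "'p set \<Rightarrow> ('p \<Rightarrow> nat) \<Rightarrow> 'p lstruct set \<Rightarrow> enat" where
  "chi_I Lang ar \<F> =
     Sup (enat ` ({l. l \<ge> 1 \<and> (\<forall>n\<ge>1. \<exists>N. forb_model Lang ar (up_E Lang ar \<F>) N \<and>
                    card (verts N) = n \<and> subgraph_emb (turan n l) (graph_part N))} \<union> {0})) + 1"

end

theory Submission
  imports Defs
begin

text \<open>The class of graph parts of models of Forb(F\<up>E) is closed under (not necessarily
induced) subgraphs: if G embeds into the graph of such a model M, pull the L-structure of M
back to G along the embedding. A forbidden induced substructure of the pullback would become,
after adding back the edges of M, a forbidden induced substructure of M, because F\<up>E is closed
under adding edges. Since every graph of chromatic number at most l embeds into a Turan graph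
T_{n,l}, the largest l for which all T_{n,l} are realisable as such graph parts is one less
than the least chromatic number of a graph that is not.\<close>

lemma subgraph_emb_trans:
  assumes "subgraph_emb G H" "subgraph_emb H K"
  shows "subgraph_emb G K"
proof -
  obtain f where f: "inj_on f (fst G)" "f ` fst G \<subseteq> fst H" "\<forall>(x, y)\<in>snd G. (f x, f y) \<in> snd H"
    using assms(1) unfolding subgraph_emb_def by blast
  obtain g where g: "inj_on g (fst H)" "g ` fst H \<subseteq> fst K" "\<forall>(x, y)\<in>snd H. (g x, g y) \<in> snd K"
    using assms(2) unfolding subgraph_emb_def by blast
  have "inj_on (g \<circ> f) (fst G)"
    using f(1,2) g(1) by (simp add: comp_inj_on inj_on_subset)
  moreover have "(g \<circ> f) ` fst G \<subseteq> fst K" using f(2) g(2) by auto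
  moreover have "\<forall>(x, y)\<in>snd G. ((g \<circ> f) x, (g \<circ> f) y) \<in> snd K" using f(3) g(3) by auto
  ultimately show ?thesis unfolding subgraph_emb_def by blast
qed

lemma graph_iso_imp_subgraph_emb:
  assumes "graph_iso G H" and "snd H \<subseteq> fst H \<times> fst H"
  shows "subgraph_emb H G"
proof -
  obtain f where f: "bij_betw f (fst G) (fst H)"
    and edges_iff: "\<forall>x\<in>fst G. \<forall>y\<in>fst G. (x, y) \<in> snd G \<longleftrightarrow> (f x, f y) \<in> snd H"
    using assms(1) unfolding graph_iso_def by blast
  define g where "g = inv_into (fst G) f"
  have g: "bij_betw g (fst H) (fst G)" unfolding g_def using f by (rule bij_betw_inv_into)
  have f_g: "f (g a) = a" if "a \<in> fst H" for a
    using f that unfolding g_def by (metis bij_betw_imp_surj_on f_inv_into_f)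
  have "(g x, g y) \<in> snd G" if "(x, y) \<in> snd H" for x y
  proof -
    have "x \<in> fst H" "y \<in> fst H" using that assms(2) by auto
    thus ?thesis using edges_iff f_g that g bij_betwE by metis
  qed
  thus ?thesis using g unfolding subgraph_emb_def bij_betw_def by blast
qed

lemma fin_graph_turan: "n \<ge> 1 \<Longrightarrow> fin_graph (turan n l)"
  unfolding fin_graph_def turan_def sym_def irrefl_def by auto

lemma chromatic_number_turan_le: "l \<ge> 1 \<Longrightarrow> chromatic_number (turan n l) \<le> l"
  unfolding chromatic_number_def
  by (rule Least_le, rule exI[of _ "\<lambda>i. i mod l"]) (auto simp: turan_def)

lemma chromatic_number_colouring:
  assumes "fin_graph G"
  shows "\<exists>c. (\<forall>v\<in>fst G. c v < chromatic_number G) \<and> (\<forall>(u, v)\<in>snd G. c u \<noteq> c v)"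
proof -
  have "\<forall>v\<in>fst G. id v < Suc (Max (fst G))" "\<forall>(u, v)\<in>snd G. id u \<noteq> id v"
    using assms unfolding fin_graph_def irrefl_def by (auto simp: le_imp_less_Suc)
  hence "\<exists>k c. (\<forall>v\<in>fst G. (c :: nat \<Rightarrow> nat) v < k) \<and> (\<forall>(u, v)\<in>snd G. c u \<noteq> c v)" by blast
  thus ?thesis unfolding chromatic_number_def by (rule LeastI_ex)
qed

lemma chromatic_number_ge_1: "fin_graph G \<Longrightarrow> chromatic_number G \<ge> 1"
  using chromatic_number_colouring[of G] unfolding fin_graph_def by fastforce

lemma subgraph_emb_turan:
  assumes G: "fin_graph G" and "chromatic_number G \<le> l"
  shows "subgraph_emb G (turan (Suc (Max (fst G)) * l) l)"
proof -
  obtain c where c: "\<forall>v\<in>fst G. c v < chromatic_number G" and c_proper: "\<forall>(u, v)\<in>snd G. c u \<noteq> c v"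
    using chromatic_number_colouring[OF G] by blast
  have c_less: "c v < l" if "v \<in> fst G" for v using c that assms(2) by fastforce
  define m where "m = Suc (Max (fst G))"
  \<comment> \<open>vertex v goes to the v-th block of l consecutive numbers, at the position of its colour\<close>
  define f where "f v = v * l + c v" for v
  have f_div: "f v div l = v" and f_mod: "f v mod l = c v" if "v \<in> fst G" for v
    using c_less[OF that] by (simp_all add: f_def)
  have f_less: "f v < m * l" if v: "v \<in> fst G" for v
  proof -
    have "f v < (v + 1) * l" using c_less[OF v] by (simp add: f_def)
    also have "\<dots> \<le> m * l"
      using G v unfolding fin_graph_def m_def by (intro mult_le_mono1) auto
    finally show ?thesis .
  qed
  have "inj_on f (fst G)" by (rule inj_onI) (metis f_div)
  moreover have "\<forall>(x, y)\<in>snd G. (f x, f y) \<in> snd (turan (m * l) l)"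
    using G c_proper f_less f_mod unfolding fin_graph_def by (fastforce simp: turan_def)
  ultimately show ?thesis using f_less unfolding subgraph_emb_def m_def turan_def by auto
qed

definition pullback_struct :: "(nat \<Rightarrow> nat) \<Rightarrow> graph \<Rightarrow> 'p set \<Rightarrow> 'p lstruct \<Rightarrow> 'p lstruct" where
  "pullback_struct f G Lang M = \<lparr>verts = fst G, edges = snd G,
     rels = (\<lambda>P. if P \<in> Lang then {xs. set xs \<subseteq> fst G \<and> map f xs \<in> rels M P} else {})\<rparr>"

lemma is_model_pullback_struct:
  assumes "is_model Lang ar M" "fin_graph G" "inj_on f (fst G)"
  shows "is_model Lang ar (pullback_struct f G Lang M)"
proof -
  have "length xs = ar P \<and> distinct xs"
    if "P \<in> Lang" "set xs \<subseteq> fst G" "map f xs \<in> rels M P" for P xs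
    using assms(1,3) that unfolding is_model_def by (force simp: distinct_map inj_on_subset)
  thus ?thesis using assms(2) unfolding is_model_def fin_graph_def pullback_struct_def by auto
qed

lemma is_model_with_edges:
  assumes "is_model Lang ar B" "inj_on k V" "k ` V \<subseteq> verts B"
    and "E \<subseteq> V \<times> V" "sym E" "irrefl E"
  shows "is_model Lang ar (B\<lparr>edges := map_prod k k ` E\<rparr>)"
proof -
  have "sym (map_prod k k ` E)" using assms(5) unfolding sym_def by auto
  moreover have "irrefl (map_prod k k ` E)"
    using assms(2,4,6) unfolding irrefl_def inj_on_def by fastforce
  ultimately show ?thesis using assms(1,3,4) unfolding is_model_def by auto
qed

lemma struct_iso_with_edges:
  assumes "bij_betw k (verts A) (verts B)" "edges A \<subseteq> verts A \<times> verts A"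
    and "\<forall>P\<in>Lang. \<forall>xs. set xs \<subseteq> verts A \<longrightarrow> (xs \<in> rels A P \<longleftrightarrow> map k xs \<in> rels B P)"
  shows "struct_iso Lang A (B\<lparr>edges := map_prod k k ` edges A\<rparr>)"
proof -
  have inj: "inj_on k (verts A)" using assms(1) by (simp add: bij_betw_def)
  have "(x, y) \<in> edges A \<longleftrightarrow> (k x, k y) \<in> map_prod k k ` edges A"
    if "x \<in> verts A" "y \<in> verts A" for x y
  proof
    assume "(k x, k y) \<in> map_prod k k ` edges A"
    then obtain a b where "(a, b) \<in> edges A" "k a = k x" "k b = k y" by auto
    moreover have "a \<in> verts A" "b \<in> verts A" using calculation(1) assms(2) by auto
    ultimately show "(x, y) \<in> edges A" using inj that by (metis inj_onD)
  qed auto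
  thus ?thesis using assms(1,3) unfolding struct_iso_def by auto
qed

lemma up_E_add_edges:
  assumes "F \<in> up_E Lang ar \<F>" "is_model Lang ar F'"
    and "verts F' = verts F" "edges F \<subseteq> edges F'" "rels F' = rels F"
  shows "F' \<in> up_E Lang ar \<F>"
proof -
  obtain F0 where "F0 \<in> \<F>" "verts F = verts F0" "edges F0 \<subseteq> edges F" "\<forall>P\<in>Lang. rels F P = rels F0 P"
    using assms(1) unfolding up_E_def by blast
  hence "verts F' = verts F0 \<and> edges F0 \<subseteq> edges F' \<and> (\<forall>P\<in>Lang. rels F' P = rels F0 P)"
    using assms(3-5) by auto
  thus ?thesis using assms(2) \<open>F0 \<in> \<F>\<close> unfolding up_E_def by blast
qed

lemma struct_iso_up_E_if_edges_contain_copy: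
  assumes F': "F' \<in> up_E Lang ar \<F>" and k: "bij_betw k (verts A) (verts F')"
    and A_edges: "edges A \<subseteq> verts A \<times> verts A" "sym (edges A)" "irrefl (edges A)"
    and rels: "\<forall>P\<in>Lang. \<forall>xs. set xs \<subseteq> verts A \<longrightarrow> (xs \<in> rels A P \<longleftrightarrow> map k xs \<in> rels F' P)"
    and edges: "edges F' \<subseteq> map_prod k k ` edges A"
  shows "\<exists>F''\<in>up_E Lang ar \<F>. struct_iso Lang A F''"
proof -
  let ?F'' = "F'\<lparr>edges := map_prod k k ` edges A\<rparr>"
  have "is_model Lang ar ?F''"
    using F' k A_edges by (intro is_model_with_edges) (auto simp: up_E_def bij_betw_def)
  with F' have "?F'' \<in> up_E Lang ar \<F>" by (rule up_E_add_edges) (simp_all add: edges)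
  thus ?thesis using struct_iso_with_edges[OF k A_edges(1) rels] by blast
qed

lemma forb_model_pullback_struct:
  assumes M: "forb_model Lang ar (up_E Lang ar \<F>) M" and G: "fin_graph G"
    and f: "inj_on f (fst G)" "f ` fst G \<subseteq> verts M" "\<forall>(x, y)\<in>snd G. (f x, f y) \<in> edges M"
  shows "forb_model Lang ar (up_E Lang ar \<F>) (pullback_struct f G Lang M)"
proof -
  let ?N = "pullback_struct f G Lang M"
  have M_model: "is_model Lang ar M" using M by (simp add: forb_model_def)
  have False if U: "U \<subseteq> fst G" "U \<noteq> {}" and F': "F' \<in> up_E Lang ar \<F>"
    and "struct_iso Lang (induced ?N U) F'" for U F'
  proof -
    obtain g where g: "bij_betw g U (verts F')"
      and g_edges: "\<forall>x\<in>U. \<forall>y\<in>U. (x, y) \<in> snd G \<inter> (U \<times> U) \<longleftrightarrow> (g x, g y) \<in> edges F'"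
      and g_rels: "\<forall>P\<in>Lang. \<forall>xs. set xs \<subseteq> U \<longrightarrow>
                     (xs \<in> rels ?N P \<and> set xs \<subseteq> U \<longleftrightarrow> map g xs \<in> rels F' P)"
      using \<open>struct_iso Lang (induced ?N U) F'\<close>
      unfolding struct_iso_def induced_def pullback_struct_def by auto
    define A where "A = induced M (f ` U)"
    define k where "k = g \<circ> inv_into U f"
    have f_U: "bij_betw f U (f ` U)" using f(1) U(1) by (simp add: bij_betw_imageI inj_on_subset)
    have k_f: "k (f x) = g x" if "x \<in> U" for x
      using f_U that unfolding k_def bij_betw_def by simp
    have verts_A: "verts A = f ` U" by (simp add: A_def induced_def)
    have k: "bij_betw k (verts A) (verts F')"
      unfolding k_def verts_A using bij_betw_inv_into[OF f_U] g by (rule bij_betw_trans)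
    have A_edges: "edges A \<subseteq> verts A \<times> verts A" "sym (edges A)" "irrefl (edges A)"
      using M_model unfolding A_def induced_def is_model_def sym_def irrefl_def by auto
    have "edges F' \<subseteq> map_prod k k ` edges A"
    proof clarify
      fix p q assume pq: "(p, q) \<in> edges F'"
      hence "p \<in> verts F'" "q \<in> verts F'" using F' unfolding up_E_def is_model_def by auto
      then obtain x y where xy: "x \<in> U" "y \<in> U" "p = g x" "q = g y"
        using g by (metis bij_betw_imp_surj_on imageE)
      hence "(f x, f y) \<in> edges A" using g_edges f(3) pq by (auto simp: A_def induced_def)
      moreover have "(p, q) = map_prod k k (f x, f y)" using xy k_f by simp
      ultimately show "(p, q) \<in> map_prod k k ` edges A" by (metis image_eqI)
    qed
    moreover have "xs \<in> rels A P \<longleftrightarrow> map k xs \<in> rels F' P"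
      if P: "P \<in> Lang" and xs: "set xs \<subseteq> verts A" for P xs
    proof -
      define ys where "ys = map (inv_into U f) xs"
      have ys: "set ys \<subseteq> U" using xs by (auto simp: ys_def verts_A inv_into_into)
      have xs_ys: "xs = map f ys"
        unfolding ys_def map_map using xs by (intro map_idI[symmetric]) (auto simp: verts_A f_inv_into_f)
      have k_xs: "map k xs = map g ys" using ys k_f by (auto simp: xs_ys)
      have "xs \<in> rels A P \<longleftrightarrow> ys \<in> rels ?N P"
        using ys U(1) P by (auto simp: xs_ys A_def induced_def pullback_struct_def)
      also have "\<dots> \<longleftrightarrow> map k xs \<in> rels F' P" using g_rels P ys by (simp add: k_xs)
      finally show ?thesis .
    qed
    ultimately obtain F'' where "F'' \<in> up_E Lang ar \<F>" "struct_iso Lang A F''"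
      using struct_iso_up_E_if_edges_contain_copy[OF F' k A_edges] by blast
    moreover have "f ` U \<subseteq> verts M" "f ` U \<noteq> {}" using f(2) U by auto
    ultimately show False using M unfolding forb_model_def A_def by blast
  qed
  moreover have "verts ?N = fst G" by (simp add: pullback_struct_def)
  ultimately show ?thesis
    using is_model_pullback_struct[OF M_model G f(1)] unfolding forb_model_def by blast
qed

definition realisable :: "'p set \<Rightarrow> ('p \<Rightarrow> nat) \<Rightarrow> 'p lstruct set \<Rightarrow> graph \<Rightarrow> bool" where
  "realisable Lang ar \<F> G \<longleftrightarrow>
     (\<exists>M. forb_model Lang ar (up_E Lang ar \<F>) M \<and> graph_iso (graph_part M) G)"

lemma realisable_if_subgraph_emb:
  assumes "forb_model Lang ar (up_E Lang ar \<F>) M" "fin_graph G" "subgraph_emb G (graph_part M)"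
  shows "realisable Lang ar \<F> G"
proof -
  obtain f where f: "inj_on f (fst G)" "f ` fst G \<subseteq> verts M" "\<forall>(x, y)\<in>snd G. (f x, f y) \<in> edges M"
    using assms(3) unfolding subgraph_emb_def graph_part_def by auto
  have "graph_iso (graph_part (pullback_struct f G Lang M)) G"
    unfolding graph_iso_def graph_part_def pullback_struct_def by (rule exI[of _ id]) simp
  thus ?thesis using forb_model_pullback_struct[OF assms(1,2) f] unfolding realisable_def by blast
qed

lemma realisable_subgraph:
  assumes "realisable Lang ar \<F> H" "fin_graph H" "subgraph_emb G H" "fin_graph G"
  shows "realisable Lang ar \<F> G"
proof -
  obtain M where M: "forb_model Lang ar (up_E Lang ar \<F>) M" "graph_iso (graph_part M) H"
    using assms(1) unfolding realisable_def by blast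
  have "subgraph_emb H (graph_part M)"
    using graph_iso_imp_subgraph_emb[OF M(2)] assms(2) unfolding fin_graph_def by blast
  thus ?thesis using realisable_if_subgraph_emb M(1) assms(3,4) subgraph_emb_trans by blast
qed

lemma turan_subgraph_of_forb_model_iff_realisable:
  assumes "n \<ge> 1"
  shows "(\<exists>N. forb_model Lang ar (up_E Lang ar \<F>) N \<and> card (verts N) = n \<and>
            subgraph_emb (turan n l) (graph_part N)) \<longleftrightarrow> realisable Lang ar \<F> (turan n l)"
proof
  assume "\<exists>N. forb_model Lang ar (up_E Lang ar \<F>) N \<and> card (verts N) = n \<and>
            subgraph_emb (turan n l) (graph_part N)"
  thus "realisable Lang ar \<F> (turan n l)"
    using realisable_if_subgraph_emb fin_graph_turan[OF assms] by blast
next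
  assume "realisable Lang ar \<F> (turan n l)"
  then obtain M where M: "forb_model Lang ar (up_E Lang ar \<F>) M"
    and iso: "graph_iso (graph_part M) (turan n l)"
    unfolding realisable_def by blast
  have "card (verts M) = n" using iso unfolding graph_iso_def graph_part_def turan_def
    by (auto dest: bij_betw_same_card)
  moreover have "subgraph_emb (turan n l) (graph_part M)"
    using graph_iso_imp_subgraph_emb[OF iso] fin_graph_turan[OF assms]
    unfolding fin_graph_def by blast
  ultimately show "\<exists>N. forb_model Lang ar (up_E Lang ar \<F>) N \<and> card (verts N) = n \<and>
            subgraph_emb (turan n l) (graph_part N)" using M by blast
qed

lemma realisable_if_chromatic_number_le:
  assumes turan: "\<forall>n\<ge>1. realisable Lang ar \<F> (turan n l)"
    and G: "fin_graph G" and "chromatic_number G \<le> l"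
  shows "realisable Lang ar \<F> G"
proof -
  define n where "n = Suc (Max (fst G)) * l"
  have "n \<ge> 1" using chromatic_number_ge_1[OF G] assms(3) by (simp add: n_def)
  thus ?thesis
    using realisable_subgraph turan fin_graph_turan subgraph_emb_turan[OF G assms(3)] G
    unfolding n_def by blast
qed

lemma Sup_plus_one_eq_Inf_enat:
  fixes S R :: "nat set"
  assumes below: "\<And>s r. s \<in> S \<Longrightarrow> r \<in> R \<Longrightarrow> s < r"
    and pos: "\<And>r. r \<in> R \<Longrightarrow> r \<ge> 1"
    and gap: "\<And>l. l \<ge> 1 \<Longrightarrow> l \<notin> S \<Longrightarrow> \<exists>r\<in>R. r \<le> l"
  shows "Sup (enat ` (S \<union> {0})) + 1 = Inf (enat ` R)"
proof (rule antisym)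
  show "Sup (enat ` (S \<union> {0})) + 1 \<le> Inf (enat ` R)"
  proof (rule Inf_greatest, clarify)
    fix r assume r: "r \<in> R"
    have "Sup (enat ` (S \<union> {0})) \<le> enat (r - 1)"
      using below[OF _ r] pos[OF r] by (intro Sup_least) fastforce
    hence "Sup (enat ` (S \<union> {0})) + 1 \<le> enat (r - 1) + 1" by (rule add_right_mono)
    thus "Sup (enat ` (S \<union> {0})) + 1 \<le> enat r" using pos[OF r] by (simp add: one_enat_def)
  qed
next
  show "Inf (enat ` R) \<le> Sup (enat ` (S \<union> {0})) + 1"
  proof (cases "Sup (enat ` (S \<union> {0}))")
    case (enat m)
    have "m + 1 \<notin> S"
      using enat Sup_upper[of "enat (m + 1)" "enat ` (S \<union> {0})"] by fastforce
    then obtain r where "r \<in> R" "r \<le> m + 1" using gap by auto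
    hence "Inf (enat ` R) \<le> enat (m + 1)" by (meson Inf_lower enat_ord_simps(1) imageI order_trans)
    thus ?thesis using enat by (simp add: one_enat_def)
  qed simp
qed

theorem theorem3p5:
  fixes Lang :: "'p set" and ar :: "'p \<Rightarrow> nat" and \<F> :: "'p lstruct set"
  assumes "finite Lang"
    and "\<forall>F\<in>\<F>. is_model Lang ar F"
  shows "chi_I Lang ar \<F> =
    Inf (enat ` {chromatic_number G | G. fin_graph G \<and>
         (\<forall>M. forb_model Lang ar (up_E Lang ar \<F>) M \<longrightarrow> \<not> graph_iso (graph_part M) G)})"
proof -
  define S where "S = {l. l \<ge> 1 \<and> (\<forall>n\<ge>1. realisable Lang ar \<F> (turan n l))}"
  define R where "R = {chromatic_number G | G. fin_graph G \<and> \<not> realisable Lang ar \<F> G}"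
  have "chi_I Lang ar \<F> = Sup (enat ` (S \<union> {0})) + 1"
    unfolding chi_I_def S_def by (simp add: turan_subgraph_of_forb_model_iff_realisable)
  also have "\<dots> = Inf (enat ` R)"
  proof (rule Sup_plus_one_eq_Inf_enat)
    show "s < r" if "s \<in> S" "r \<in> R" for s r
      using that realisable_if_chromatic_number_le unfolding S_def R_def by force
    show "r \<ge> 1" if "r \<in> R" for r
      using that chromatic_number_ge_1 unfolding R_def by blast
    show "\<exists>r\<in>R. r \<le> l" if "l \<ge> 1" "l \<notin> S" for l
      using that fin_graph_turan chromatic_number_turan_le unfolding S_def R_def by blast
  qed
  also have "R = {chromatic_number G | G. fin_graph G \<and>
         (\<forall>M. forb_model Lang ar (up_E Lang ar \<F>) M \<longrightarrow> \<not> graph_iso (graph_part M) G)}"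
    unfolding R_def realisable_def by blast
  finally show ?thesis .
qed

end
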